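(* Let $K:E(K_{s,t})\to L_n$ be an edge-labeling of the complete bipartite graph $K_{s,t}$ with permutations from $L_n$. Then $(K_{s,t},K)$ has no consistent vertex-labeling if and only if $K_{s,t}$ contains a $4$-cycle $C$ such that $(C,K|_{E(C)})$ has no consistent vertex-labeling.
   Context: Labeled graphs: $G$ is a finite simple graph in which each edge is given a fixed orientation; $uv$ denotes the edge oriented from $u$ to $v$. An edge-labeling $K:E(G)\to S_n$ assigns to each edge a permutation of $[n]=\{0,\dots,n-1\}$. A vertex-labeling is a map $k:V(G)\to[n]$. An edge $uv$ with $K(uv)=\pi$ is a contradiction of $k$ if $\pi(k(u))\neq k(v)$. A vertex-labeling is consistent if it has no contradictions. $L_n=\{\pi_0,\dots,\pi_{n-1}\}\subseteq S_n$, where $\pi_i(x)\equiv i-x \pmod n$. Each $\pi_i$ is an involution, so orientation is irrelevant. *)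

theory Defs
  imports Main
begin

definition piL :: "nat \<Rightarrow> nat \<Rightarrow> nat \<Rightarrow> nat" where
  "piL n i x = nat ((int i - int x) mod int n)"

definition Ln :: "nat \<Rightarrow> (nat \<Rightarrow> nat) set" where
  "Ln n = {piL n i | i. i < n}"

text \<open>A labeled graph: vertex set V, oriented edge set E (pair (u,v) = edge uv),
  edge-labeling K. A vertex-labeling k into [n] is consistent if it has no contradictions.\<close>
definition consistent ::
  "nat \<Rightarrow> 'v set \<Rightarrow> ('v \<times> 'v) set \<Rightarrow> ('v \<times> 'v \<Rightarrow> nat \<Rightarrow> nat) \<Rightarrow> ('v \<Rightarrow> nat) \<Rightarrow> bool" where
  "consistent n V E K k \<longleftrightarrow> (\<forall>v\<in>V. k v < n) \<and> (\<forall>(u,v)\<in>E. K (u,v) (k u) = k v)"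

definition KV :: "nat \<Rightarrow> nat \<Rightarrow> (nat + nat) set" where
  "KV s t = Inl ` {..<s} \<union> Inr ` {..<t}"

definition KE :: "nat \<Rightarrow> nat \<Rightarrow> ((nat + nat) \<times> (nat + nat)) set" where
  "KE s t = {(Inl a, Inr b) | a b. a < s \<and> b < t}"

definition C4V :: "nat \<Rightarrow> nat \<Rightarrow> nat \<Rightarrow> nat \<Rightarrow> (nat + nat) set" where
  "C4V a1 a2 b1 b2 = {Inl a1, Inl a2, Inr b1, Inr b2}"

definition C4E :: "nat \<Rightarrow> nat \<Rightarrow> nat \<Rightarrow> nat \<Rightarrow> ((nat + nat) \<times> (nat + nat)) set" where
  "C4E a1 a2 b1 b2 = {(Inl a1, Inr b1), (Inl a1, Inr b2), (Inl a2, Inr b1), (Inl a2, Inr b2)}"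

end

theory Submission
  imports Defs "HOL-Number_Theory.Cong"
begin

text \<open>Labelling the edge \<open>ab\<close> by \<open>\<pi>\<^sub>c\<close> forces \<open>k(a) + k(b) \<equiv> c (mod n)\<close>. Hence a consistent
  labelling of \<open>K\<^sub>s\<^sub>,\<^sub>t\<close> exists iff the edge indices \<open>c\<close> are a sum \<open>x(a) + y(b)\<close> modulo \<open>n\<close>, and
  this holds iff every 4-cycle \<open>a\<^sub>1 b\<^sub>1 a\<^sub>2 b\<^sub>2\<close> satisfies
  \<open>c(a\<^sub>1,b\<^sub>1) + c(a\<^sub>2,b\<^sub>2) \<equiv> c(a\<^sub>1,b\<^sub>2) + c(a\<^sub>2,b\<^sub>1)\<close>: fixing \<open>a\<^sub>0, b\<^sub>0\<close>, take
  \<open>x(a) = c(a,b\<^sub>0) - c(a\<^sub>0,b\<^sub>0)\<close> and \<open>y(b) = c(a\<^sub>0,b)\<close>.\<close>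

lemma piL_eq_iff_cong:
  assumes "y < n"
  shows "piL n i x = y \<longleftrightarrow> [int x + int y = int i] (mod int n)"
proof -
  have "piL n i x = y \<longleftrightarrow> (int i - int x) mod int n = int y mod int n"
    using assms by (auto simp: piL_def)
  also have "\<dots> \<longleftrightarrow> [int i - int x = int y] (mod int n)"
    by (simp add: cong_def)
  also have "\<dots> \<longleftrightarrow> [int x + int y = int i] (mod int n)"
    by (simp add: cong_iff_dvd_diff dvd_diff_commute algebra_simps)
  finally show ?thesis .
qed

lemma Ln_labelling_obtain_indices:
  assumes "\<forall>e\<in>E. K e \<in> Ln n"
  obtains c where "\<forall>e\<in>E. K e = piL n (c e)"
proof -
  from assms have "\<forall>e\<in>E. \<exists>i. K e = piL n i"
    by (auto simp: Ln_def)
  from bchoice[OF this] show thesis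
    using that by blast
qed

lemma consistent_iff_cong:
  assumes "\<forall>e\<in>E. K e = piL n (c e)" and "E \<subseteq> V \<times> V"
  shows "consistent n V E K k \<longleftrightarrow>
    (\<forall>v\<in>V. k v < n) \<and> (\<forall>(u, v)\<in>E. [int (k u) + int (k v) = int (c (u, v))] (mod int n))"
proof -
  have "K (u, v) (k u) = k v \<longleftrightarrow> [int (k u) + int (k v) = int (c (u, v))] (mod int n)"
    if "(u, v) \<in> E" "k v < n" for u v
    using assms(1) that by (simp add: piL_eq_iff_cong)
  with assms(2) show ?thesis
    unfolding consistent_def by blast
qed

lemma consistent_subgraph:
  assumes "consistent n V E K k" and "V' \<subseteq> V" and "E' \<subseteq> E"
  shows "consistent n V' E' K k"
  using assms unfolding consistent_def by blast

lemma cong_four_cycle_if_potential: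
  fixes c :: "'a \<Rightarrow> 'b \<Rightarrow> int"
  assumes "\<And>a b. a \<in> {a1, a2} \<Longrightarrow> b \<in> {b1, b2} \<Longrightarrow> [x a + y b = c a b] (mod m)"
  shows "[c a1 b1 + c a2 b2 = c a1 b2 + c a2 b1] (mod m)"
proof -
  have "[c a1 b1 + c a2 b2 = (x a1 + y b1) + (x a2 + y b2)] (mod m)"
    by (rule cong_sym, intro cong_add assms) simp_all
  also have "(x a1 + y b1) + (x a2 + y b2) = (x a1 + y b2) + (x a2 + y b1)"
    by simp
  also have "[\<dots> = c a1 b2 + c a2 b1] (mod m)"
    by (intro cong_add assms) simp_all
  finally show ?thesis .
qed

lemma potential_if_cong_four_cycle:
  fixes c :: "'a \<Rightarrow> 'b \<Rightarrow> int"
  assumes "\<And>a1 a2 b1 b2. a1 \<in> A \<Longrightarrow> a2 \<in> A \<Longrightarrow> b1 \<in> B \<Longrightarrow> b2 \<in> B \<Longrightarrow>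
      [c a1 b1 + c a2 b2 = c a1 b2 + c a2 b1] (mod m)"
  obtains x y where "\<And>a b. a \<in> A \<Longrightarrow> b \<in> B \<Longrightarrow> [x a + y b = c a b] (mod m)"
proof -
  define a0 where "a0 = (SOME a. a \<in> A)"
  define b0 where "b0 = (SOME b. b \<in> B)"
  have "[(c a b0 - c a0 b0) + c a0 b = c a b] (mod m)" if "a \<in> A" "b \<in> B" for a b
  proof -
    from that have "a0 \<in> A" "b0 \<in> B"
      unfolding a0_def b0_def by (auto intro: someI)
    with that have "[c a b + c a0 b0 = c a b0 + c a0 b] (mod m)"
      using assms by blast
    then have "[c a b + c a0 b0 - c a0 b0 = c a b0 + c a0 b - c a0 b0] (mod m)"
      by (rule cong_diff) simp
    then show ?thesis
      by (simp add: cong_sym_eq algebra_simps)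
  qed
  then show thesis
    by (rule that)
qed

lemma consistent_C4_imp_cong:
  assumes "\<forall>e\<in>C4E a1 a2 b1 b2. K e = piL n (c e)"
    and "consistent n (C4V a1 a2 b1 b2) (C4E a1 a2 b1 b2) K k"
  shows "[int (c (Inl a1, Inr b1)) + int (c (Inl a2, Inr b2)) =
          int (c (Inl a1, Inr b2)) + int (c (Inl a2, Inr b1))] (mod int n)"
proof -
  have sub: "C4E a1 a2 b1 b2 \<subseteq> C4V a1 a2 b1 b2 \<times> C4V a1 a2 b1 b2"
    by (auto simp: C4E_def C4V_def)
  from assms(2) have "\<forall>(u, v)\<in>C4E a1 a2 b1 b2. [int (k u) + int (k v) = int (c (u, v))] (mod int n)"
    unfolding consistent_iff_cong[OF assms(1) sub] by (rule conjunct2)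
  then have "[int (k (Inl a)) + int (k (Inr b)) = int (c (Inl a, Inr b))] (mod int n)"
    if "a \<in> {a1, a2}" "b \<in> {b1, b2}" for a b
    using that unfolding C4E_def by blast
  then show ?thesis
    by (rule cong_four_cycle_if_potential)
qed

lemma cong_four_cycle_if_C4_consistent:
  assumes "\<forall>e\<in>KE s t. K e = piL n (c e)" and "a1 < s" "a2 < s" "b1 < t" "b2 < t"
    and "a1 \<noteq> a2 \<Longrightarrow> b1 \<noteq> b2 \<Longrightarrow> \<exists>k. consistent n (C4V a1 a2 b1 b2) (C4E a1 a2 b1 b2) K k"
  shows "[int (c (Inl a1, Inr b1)) + int (c (Inl a2, Inr b2)) =
          int (c (Inl a1, Inr b2)) + int (c (Inl a2, Inr b1))] (mod int n)"
proof (cases "a1 = a2 \<or> b1 = b2")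
  case True
  then show ?thesis
    by (elim disjE) (simp_all add: add.commute)
next
  case False
  with assms(6) obtain k where "consistent n (C4V a1 a2 b1 b2) (C4E a1 a2 b1 b2) K k"
    by blast
  moreover have "\<forall>e\<in>C4E a1 a2 b1 b2. K e = piL n (c e)"
    using assms(1-5) by (auto simp: C4E_def KE_def)
  ultimately show ?thesis
    by (rule consistent_C4_imp_cong[rotated])
qed

lemma consistent_KE_if_cong_four_cycle:
  assumes "n \<ge> 1" and "\<forall>e\<in>KE s t. K e = piL n (c e)"
    and "\<And>a1 a2 b1 b2. a1 < s \<Longrightarrow> a2 < s \<Longrightarrow> b1 < t \<Longrightarrow> b2 < t \<Longrightarrow>
      [int (c (Inl a1, Inr b1)) + int (c (Inl a2, Inr b2)) =
       int (c (Inl a1, Inr b2)) + int (c (Inl a2, Inr b1))] (mod int n)"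
  shows "\<exists>k. consistent n (KV s t) (KE s t) K k"
proof -
  obtain x y where xy: "\<And>a b. a < s \<Longrightarrow> b < t \<Longrightarrow>
      [x a + y b = int (c (Inl a, Inr b))] (mod int n)"
    using potential_if_cong_four_cycle[of "{..<s}" "{..<t}" "\<lambda>a b. int (c (Inl a, Inr b))"]
      assms(3) by auto
  define k where "k v = nat (case v of Inl a \<Rightarrow> x a mod int n | Inr b \<Rightarrow> y b mod int n)" for v
  have sub: "KE s t \<subseteq> KV s t \<times> KV s t"
    by (auto simp: KE_def KV_def)
  have "consistent n (KV s t) (KE s t) K k"
    unfolding consistent_iff_cong[OF assms(2) sub]
  proof (intro conjI ballI)
    show "k v < n" for v
      using \<open>n \<ge> 1\<close> by (auto simp: k_def nat_less_iff split: sum.split)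
  next
    fix e assume "e \<in> KE s t"
    then obtain a b where e: "e = (Inl a, Inr b)" and "a < s" "b < t"
      by (auto simp: KE_def)
    with xy have "[int (k (Inl a)) + int (k (Inr b)) = int (c (Inl a, Inr b))] (mod int n)"
      using \<open>n \<ge> 1\<close> by (simp add: k_def cong_def mod_add_eq)
    with e show "case e of (u, v) \<Rightarrow> [int (k u) + int (k v) = int (c (u, v))] (mod int n)"
      by simp
  qed
  then show ?thesis
    by blast
qed

theorem mainTheorem19:
  fixes n s t :: nat and K :: "(nat + nat) \<times> (nat + nat) \<Rightarrow> nat \<Rightarrow> nat"
  assumes "n \<ge> 1"
    and "\<forall>e\<in>KE s t. K e \<in> Ln n"
  shows "(\<not> (\<exists>k. consistent n (KV s t) (KE s t) K k)) \<longleftrightarrow>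
         (\<exists>a1 a2 b1 b2. a1 < s \<and> a2 < s \<and> b1 < t \<and> b2 < t \<and> a1 \<noteq> a2 \<and> b1 \<noteq> b2 \<and>
            \<not> (\<exists>k. consistent n (C4V a1 a2 b1 b2) (C4E a1 a2 b1 b2) K k))"
  (is "?inconsistent \<longleftrightarrow> (\<exists>a1 a2 b1 b2. ?bad_cycle a1 a2 b1 b2)")
proof
  obtain c where c: "\<forall>e\<in>KE s t. K e = piL n (c e)"
    using Ln_labelling_obtain_indices assms(2) by blast
  assume ?inconsistent
  show "\<exists>a1 a2 b1 b2. ?bad_cycle a1 a2 b1 b2"
  proof (rule ccontr)
    assume "\<not> ?thesis"
    then have "[int (c (Inl a1, Inr b1)) + int (c (Inl a2, Inr b2)) =
           int (c (Inl a1, Inr b2)) + int (c (Inl a2, Inr b1))] (mod int n)"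
      if "a1 < s" "a2 < s" "b1 < t" "b2 < t" for a1 a2 b1 b2
      using cong_four_cycle_if_C4_consistent[OF c that] that by blast
    with consistent_KE_if_cong_four_cycle[OF assms(1) c] \<open>?inconsistent\<close> show False
      by blast
  qed
next
  assume "\<exists>a1 a2 b1 b2. ?bad_cycle a1 a2 b1 b2"
  then obtain a1 a2 b1 b2 where "?bad_cycle a1 a2 b1 b2" by blast
  then have "C4V a1 a2 b1 b2 \<subseteq> KV s t" "C4E a1 a2 b1 b2 \<subseteq> KE s t"
    and "\<not> (\<exists>k. consistent n (C4V a1 a2 b1 b2) (C4E a1 a2 b1 b2) K k)"
    by (auto simp: C4V_def KV_def C4E_def KE_def)
  then show ?inconsistent
    using consistent_subgraph by blast
qed

end
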